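(* Let $B$ be a nilpotent $n\times n$ matrix with $\mathrm{sh}(B)=(\lambda,\lambda)$ (so $n=2\lambda$). If $\underline{\mu}=(\mu_1,\ldots,\mu_s)\in\mathcal{P}(\mathcal{N}_B)$, then either $\underline{\mu}=(n)$ or $\mu_1\le\lambda+1$.
   Context: $\mathbb{F}$ is an algebraically closed field of characteristic $0$. For a nilpotent matrix $A$, $\mathrm{sh}(A)$ is the partition of $n$ given by the sizes of the Jordan blocks of its Jordan canonical form; $\mathcal{N}_B$ is the set of nilpotent $n\times n$ matrices over $\mathbb{F}$ commuting with $B$ and $\mathcal{P}(\mathcal{N}_B)=\{\mathrm{sh}(A):A\in\mathcal{N}_B\}$. *)

theory Defs
  imports "Jordan_Normal_Form.Jordan_Normal_Form_Uniqueness"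
    "HOL-Computational_Algebra.Polynomial"
    "HOL-Library.Multiset"
begin

definition nilpotent_mat :: "'a :: semiring_1 mat \<Rightarrow> nat \<Rightarrow> bool" where
  "nilpotent_mat A n \<longleftrightarrow> A \<in> carrier_mat n n \<and> (\<exists>k. A ^\<^sub>m k = 0\<^sub>m n n)"

definition sh :: "'a :: field mat \<Rightarrow> nat multiset" where
  "sh A = (THE M. \<exists>n_as. jordan_nf A n_as \<and> M = mset (map fst n_as))"

definition nil_comm :: "'a :: semiring_1 mat \<Rightarrow> nat \<Rightarrow> 'a mat set" where
  "nil_comm B n = {A. nilpotent_mat A n \<and> A * B = B * A}"

definition partitions_of_nil_comm :: "'a :: field mat \<Rightarrow> nat \<Rightarrow> nat multiset set" where
  "partitions_of_nil_comm B n = sh ` nil_comm B n"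

end

(*
  After a change of basis B is the Jordan matrix J = N (+) N with N the nilpotent
  Jordan block of size lam.  Matrices commuting with N are the upper triangular Toeplitz
  matrices T(p), p a polynomial read modulo x^lam, so the commutant of J consists of block
  matrices (T a, T b; T c, T d); this identifies it with 2 x 2 matrices R over F[x]/(x^lam),
  and A^k = 0 iff x^lam divides every entry of R^k.  If x^2 divides det R, then R(0) is a
  nilpotent 2 x 2 matrix with zero determinant, hence zero trace, and the Cayley-Hamilton
  recursion R^(k+2) = tr R * R^(k+1) - det R * R^k shows x^k | R^(k+1); so A^(lam+1) = 0.
  Otherwise x^2 does not divide det R and det (R^(2 lam - 1)) = (det R)^(2 lam - 1) is not
  divisible by x^(2 lam); so A^(2 lam - 1) <> 0 and A is a single Jordan block of size n.

  The argument works
  over any algebraically closed field.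
*)
theory Submission
  imports Defs "Jordan_Normal_Form.Jordan_Normal_Form_Existence" "Jordan_Normal_Form.DL_Rank"
begin

section \<open>Jordan normal forms over algebraically closed fields\<close>

text \<open>Conjugating by a basis that starts with an eigenvector puts a square matrix into
  block form with a zero lower-left column: the first step of triangularisation.\<close>
lemma similar_first_column_eigen:
  fixes A :: "'a::alg_closed_field mat"
  assumes A: "A \<in> carrier_mat (Suc m) (Suc m)"
  shows "\<exists>A1 A2 A3. A1 \<in> carrier_mat 1 1 \<and> A2 \<in> carrier_mat 1 m \<and> A3 \<in> carrier_mat m m \<and>
    similar_mat A (four_block_mat A1 A2 (0\<^sub>m m 1) A3)"
proof -
  define n where "n = Suc m"
  have A: "A \<in> carrier_mat n n" using A n_def by auto
  have "degree (char_poly A) = n" using degree_monic_char_poly[OF A] by auto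
  then obtain e where "poly (char_poly A) e = 0"
    using alg_closed_imp_poly_has_root[of "char_poly A"] n_def by auto
  hence e: "eigenvalue A e" using eigenvalue_root_char_poly[OF A] by auto
  define v where "v = find_eigenvector A e"
  define b where "b = basis_completion v"
  define W where "W = mat_of_cols n b"
  from find_eigenvector[OF A e] have "eigenvector A v e" unfolding v_def .
  hence v: "v \<in> carrier_vec n" and v0: "v \<noteq> 0\<^sub>v n" and eig: "A *\<^sub>v v = e \<cdot>\<^sub>v v"
    using A unfolding eigenvector_def by auto
  interpret vec_space "TYPE('a)" n .
  from basis_completion[OF v v0, folded b_def]
  have dist_b: "distinct b" and indep: "\<not> lin_dep (set b)" and bc: "set b \<subseteq> carrier_vec n"
    and hdb: "hd b = v" and len_b: "length b = n" by auto
  have W: "W \<in> carrier_mat n n" unfolding W_def using len_b by auto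
  have colsW: "cols W = b" unfolding W_def using bc len_b by (simp add: cols_mat_of_cols)
  have "rank W = n" using lin_indpt_full_rank[OF W] colsW dist_b indep by auto
  hence "det W \<noteq> 0" using det_rank_iff[OF W] by auto
  from det_non_zero_imp_unit[OF W this, of undefined]
  obtain W' where W': "W' \<in> carrier_mat n n" and W'W: "W' * W = 1\<^sub>m n" and WW': "W * W' = 1\<^sub>m n"
    unfolding Units_def ring_mat_def by auto
  define A' where "A' = W' * A * W"
  have A'c: "A' \<in> carrier_mat n n" using W W' A unfolding A'_def by auto
  have "similar_mat_wit A' A W' W"
    by (rule similar_mat_witI[of _ _ n], insert W W' A A'c W'W WW', auto simp: A'_def)
  hence sim: "similar_mat A A'" using similar_mat_wit_sym unfolding similar_mat_def by blast
  have n0: "0 < n" using n_def by auto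
  have colW0: "col W 0 = v" using colsW hdb len_b n0 W
    by (metis cols_nth carrier_matD(2) hd_conv_nth list.size(3) less_not_refl2)
  have "col A' 0 = W' *\<^sub>v (A *\<^sub>v col W 0)" unfolding A'_def using W W' A n0
    by (subst col_mult2[of _ n n _ n], auto)
  also have "\<dots> = e \<cdot>\<^sub>v (W' *\<^sub>v col W 0)" unfolding colW0 eig using W' v by (simp add: mult_mat_vec)
  also have "W' *\<^sub>v col W 0 = col (W' * W) 0" by (rule col_mult2[OF W' W n0, symmetric])
  also have "\<dots> = unit_vec n 0" unfolding W'W using n0 by simp
  finally have col0: "col A' 0 = e \<cdot>\<^sub>v unit_vec n 0" .
  obtain A1 A2 A0 A3 where split: "split_block A' 1 1 = (A1, A2, A0, A3)"
    by (cases "split_block A' 1 1", auto)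
  from A'c n_def have "dim_row A' = 1 + m" "dim_col A' = 1 + m" by auto
  from split_block[OF split this] have blocks: "A1 \<in> carrier_mat 1 1" "A2 \<in> carrier_mat 1 m"
    "A3 \<in> carrier_mat m m" and A'_eq: "A' = four_block_mat A1 A2 A0 A3" by auto
  have "A' $$ (Suc i, 0) = 0" if "i < m" for i
    using arg_cong[OF col0, of "\<lambda>v. v $ Suc i"] that A'c n_def by auto
  hence "A0 = 0\<^sub>m m 1" using split[unfolded split_block_def Let_def] A'c n_def by auto
  with sim blocks A'_eq show ?thesis by blast
qed

lemma similar_upper_triangular:
  fixes A :: "'a::alg_closed_field mat"
  assumes "A \<in> carrier_mat n n"
  shows "\<exists>B. B \<in> carrier_mat n n \<and> upper_triangular B \<and> similar_mat A B"
  using assms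
proof (induction n arbitrary: A)
  case 0
  then show ?case by (intro exI[of _ A], auto simp: upper_triangular_def intro: similar_mat_refl)
next
  case (Suc m A)
  from similar_first_column_eigen[OF Suc.prems] obtain A1 A2 A3 where
    A1: "A1 \<in> carrier_mat 1 1" and A2: "A2 \<in> carrier_mat 1 m" and A3: "A3 \<in> carrier_mat m m"
    and simA: "similar_mat A (four_block_mat A1 A2 (0\<^sub>m m 1) A3)" by blast
  from Suc.IH[OF A3] obtain C where C: "C \<in> carrier_mat m m" and utC: "upper_triangular C"
    and "similar_mat A3 C" by auto
  then obtain P Q where wit: "similar_mat_wit A3 C P Q" unfolding similar_mat_def by auto
  from similar_mat_witD2[OF A3 wit] have P: "P \<in> carrier_mat m m" and Q: "Q \<in> carrier_mat m m"
    and PQ: "P * Q = 1\<^sub>m m" by auto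
  let ?C = "four_block_mat A1 (A2 * P) (0\<^sub>m m 1) C"
  have A2_eq: "A2 = 1\<^sub>m 1 * (A2 * P) * Q" using A2 P Q PQ
    by (metis assoc_mult_mat left_mult_one_mat right_mult_one_mat mult_carrier_mat)
  have "similar_mat_wit (four_block_mat A1 A2 (0\<^sub>m m 1) A3) ?C
      (four_block_mat (1\<^sub>m 1) (0\<^sub>m 1 m) (0\<^sub>m m 1) P) (four_block_mat (1\<^sub>m 1) (0\<^sub>m 1 m) (0\<^sub>m m 1) Q)"
    by (rule similar_mat_wit_four_block[OF similar_mat_wit_refl[OF A1] wit A2_eq _ A1 A3],
        insert A2 P Q, auto)
  hence "similar_mat A ?C" using simA similar_mat_trans unfolding similar_mat_def by blast
  moreover have "upper_triangular ?C"
    by (rule upper_triangular_four_block[OF A1 C _ utC], insert A1, auto simp: upper_triangular_def)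
  moreover have "?C \<in> carrier_mat (Suc m) (Suc m)" using A1 A2 P C by auto
  ultimately show ?case by blast
qed

text \<open>Jordan normal forms exist over algebraically closed fields (the library's existence
  theorem is stated for conjugatable ordered fields with a factored characteristic polynomial).\<close>
lemma jordan_nf_exists_alg_closed:
  fixes A :: "'a::alg_closed_field mat"
  assumes "A \<in> carrier_mat n n"
  shows "\<exists>n_as. jordan_nf A n_as"
proof -
  from similar_upper_triangular[OF assms] obtain B where B: "B \<in> carrier_mat n n"
    "upper_triangular B" "similar_mat A B" by auto
  from triangular_to_jnf_vector[OF B(1,2)] have "jordan_nf B (triangular_to_jnf_vector B)" .
  with B(3) show ?thesis unfolding jordan_nf_def using similar_mat_trans by blast
qed

text \<open>The multiset of Jordan blocks is unique, since the number of blocks of each size and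
  eigenvalue is determined by the matrix.\<close>
lemma jordan_nf_mset_unique:
  fixes A :: "'a::field mat"
  assumes "jordan_nf A n_as" "jordan_nf A m_bs"
  shows "mset n_as = mset m_bs"
proof (rule multiset_eqI)
  fix x :: "nat \<times> 'a"
  obtain k ev where x: "x = (k, ev)" by force
  show "count (mset n_as) x = count (mset m_bs) x"
  proof (cases "k = 0")
    case True
    have "x \<notin> set n_as" "x \<notin> set m_bs" using assms unfolding jordan_nf_def x True by force+
    thus ?thesis by (metis in_multiset_in_set not_in_iff)
  next
    case False
    from compute_nr_of_jordan_blocks[OF assms(1) False, of ev]
      compute_nr_of_jordan_blocks[OF assms(2) False, of ev]
    have "length (filter ((=) (k, ev)) n_as) = length (filter ((=) (k, ev)) m_bs)" by simp
    thus ?thesis unfolding x count_mset count_list_eq_length_filter by simp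
  qed
qed

lemma sh_jordan_nf:
  fixes A :: "'a::field mat"
  assumes "jordan_nf A n_as"
  shows "sh A = mset (map fst n_as)"
  unfolding sh_def
proof (rule the_equality)
  show "\<exists>m_bs. jordan_nf A m_bs \<and> mset (map fst n_as) = mset (map fst m_bs)" using assms by auto
  fix M assume "\<exists>m_bs. jordan_nf A m_bs \<and> M = mset (map fst m_bs)"
  then obtain m_bs where m: "jordan_nf A m_bs" "M = mset (map fst m_bs)" by auto
  from jordan_nf_mset_unique[OF assms m(1)] have "image_mset fst (mset n_as) = image_mset fst (mset m_bs)"
    by simp
  thus "M = mset (map fst n_as)" using m(2) by simp
qed

lemma jordan_nf_dim:
  assumes "jordan_nf A n_as" and A: "A \<in> carrier_mat n n"
  shows "sum_list (map fst n_as) = n"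
proof -
  from assms(1) obtain P Q where "similar_mat_wit A (jordan_matrix n_as) P Q"
    unfolding jordan_nf_def similar_mat_def by auto
  with similar_mat_witD2[OF A this] show ?thesis using jordan_matrix_carrier[of n_as] by auto
qed

section \<open>Nilpotency read off the Jordan blocks\<close>

lemma four_block_eq_iff:
  assumes "A \<in> carrier_mat r1 c1" "B \<in> carrier_mat r1 c2" "C \<in> carrier_mat r2 c1" "D \<in> carrier_mat r2 c2"
    "A' \<in> carrier_mat r1 c1" "B' \<in> carrier_mat r1 c2" "C' \<in> carrier_mat r2 c1" "D' \<in> carrier_mat r2 c2"
  shows "four_block_mat A B C D = four_block_mat A' B' C' D' \<longleftrightarrow> A = A' \<and> B = B' \<and> C = C' \<and> D = D'"
proof
  assume eq: "four_block_mat A B C D = four_block_mat A' B' C' D'"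
  have e: "four_block_mat A B C D $$ (i, j) = four_block_mat A' B' C' D' $$ (i, j)" for i j
    using eq by simp
  show "A = A' \<and> B = B' \<and> C = C' \<and> D = D'"
  proof (intro conjI eq_matI)
    fix i j assume "i < dim_row A'" "j < dim_col A'"
    thus "A $$ (i, j) = A' $$ (i, j)" using e[of i j] assms by auto
  next
    fix i j assume "i < dim_row B'" "j < dim_col B'"
    thus "B $$ (i, j) = B' $$ (i, j)" using e[of i "j + c1"] assms by auto
  next
    fix i j assume "i < dim_row C'" "j < dim_col C'"
    thus "C $$ (i, j) = C' $$ (i, j)" using e[of "i + r1" j] assms by auto
  next
    fix i j assume "i < dim_row D'" "j < dim_col D'"
    thus "D $$ (i, j) = D' $$ (i, j)" using e[of "i + r1" "j + c1"] assms by auto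
  qed (insert assms, auto)
qed auto

lemma four_block_zero_iff:
  assumes "A \<in> carrier_mat r1 c1" "B \<in> carrier_mat r1 c2" "C \<in> carrier_mat r2 c1" "D \<in> carrier_mat r2 c2"
  shows "four_block_mat A B C D = 0\<^sub>m (r1 + r2) (c1 + c2) \<longleftrightarrow>
    A = 0\<^sub>m r1 c1 \<and> B = 0\<^sub>m r1 c2 \<and> C = 0\<^sub>m r2 c1 \<and> D = 0\<^sub>m r2 c2"
proof -
  have "0\<^sub>m (r1 + r2) (c1 + c2) = four_block_mat (0\<^sub>m r1 c1) (0\<^sub>m r1 c2) (0\<^sub>m r2 c1) (0\<^sub>m r2 c2)"
    by (rule eq_matI, auto)
  thus ?thesis using four_block_eq_iff[OF assms, of "0\<^sub>m r1 c1" "0\<^sub>m r1 c2" "0\<^sub>m r2 c1" "0\<^sub>m r2 c2"]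
    by simp
qed

lemma diag_block_mat_zero_iff:
  "diag_block_mat Bs = 0\<^sub>m (sum_list (map dim_row Bs)) (sum_list (map dim_col Bs)) \<longleftrightarrow>
   (\<forall>M \<in> set Bs. M = 0\<^sub>m (dim_row M) (dim_col M))"
proof (induction Bs)
  case (Cons M Bs)
  let ?D = "diag_block_mat Bs"
  have D: "?D \<in> carrier_mat (sum_list (map dim_row Bs)) (sum_list (map dim_col Bs))"
    by (simp add: carrier_matI dim_diag_block_mat)
  have "diag_block_mat (M # Bs) =
      four_block_mat M (0\<^sub>m (dim_row M) (dim_col ?D)) (0\<^sub>m (dim_row ?D) (dim_col M)) ?D"
    by (simp add: Let_def)
  with four_block_zero_iff[of M "dim_row M" "dim_col M", OF _ _ _ D] Cons.IH
  show ?case by (auto simp: dim_diag_block_mat)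
qed simp

lemma similar_mat_wit_zero_iff:
  assumes "similar_mat_wit A B P Q" "A \<in> carrier_mat n n"
  shows "A = 0\<^sub>m n n \<longleftrightarrow> B = 0\<^sub>m n n"
proof -
  from similar_mat_witD2[OF assms(2) assms(1)] have QP: "Q * P = 1\<^sub>m n" and A: "A = P * B * Q"
    and c: "B \<in> carrier_mat n n" "P \<in> carrier_mat n n" "Q \<in> carrier_mat n n" by auto
  have "Q * A * P = (Q * P) * B * (Q * P)" using c A by (simp add: assoc_mult_mat[of _ n n _ n _ n])
  hence "B = Q * A * P" using QP c by simp
  thus ?thesis using A c by auto
qed

lemma jordan_block_pow_zero_iff:
  assumes "0 < s"
  shows "jordan_block s (a::'a::field) ^\<^sub>m k = 0\<^sub>m s s \<longleftrightarrow> a = 0 \<and> s \<le> k"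
proof
  assume z: "jordan_block s a ^\<^sub>m k = 0\<^sub>m s s"
  have "(jordan_block s a ^\<^sub>m k) $$ (0, 0) = a ^ k" unfolding jordan_block_pow using assms by simp
  hence a: "a = 0" using z assms by simp
  moreover have "s \<le> k"
  proof (rule ccontr)
    assume "\<not> s \<le> k"
    hence "(jordan_block s a ^\<^sub>m k) $$ (0, k) = 1" unfolding a jordan_block_zero_pow by simp
    thus False using z \<open>\<not> s \<le> k\<close> by simp
  qed
  ultimately show "a = 0 \<and> s \<le> k" by auto
next
  assume "a = 0 \<and> s \<le> k"
  thus "jordan_block s a ^\<^sub>m k = 0\<^sub>m s s" by (auto simp: jordan_block_zero_pow intro!: eq_matI)
qed

lemma jordan_nf_pow_zero_iff:
  fixes A :: "'a::field mat"
  assumes jnf: "jordan_nf A n_as" and A: "A \<in> carrier_mat n n"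
  shows "A ^\<^sub>m k = 0\<^sub>m n n \<longleftrightarrow> (\<forall>(s, a) \<in> set n_as. a = 0 \<and> s \<le> k)"
proof -
  from jnf obtain P Q where wit: "similar_mat_wit A (jordan_matrix n_as) P Q"
    unfolding jordan_nf_def similar_mat_def by auto
  let ?L = "map (\<lambda>(s, a). jordan_block s a ^\<^sub>m k) n_as"
  have dims: "map dim_row ?L = map fst n_as" "map dim_col ?L = map fst n_as"
    by (induct n_as, auto)
  have pos: "0 < s" if "(s, a) \<in> set n_as" for s a using jnf that unfolding jordan_nf_def by force
  have "A ^\<^sub>m k = 0\<^sub>m n n \<longleftrightarrow> jordan_matrix n_as ^\<^sub>m k = 0\<^sub>m n n"
    using similar_mat_wit_zero_iff[OF similar_mat_wit_pow[OF wit]] A by auto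
  also have "\<dots> \<longleftrightarrow> diag_block_mat ?L = 0\<^sub>m n n" by (simp only: jordan_matrix_pow)
  also have "\<dots> \<longleftrightarrow> (\<forall>M \<in> set ?L. M = 0\<^sub>m (dim_row M) (dim_col M))"
    using diag_block_mat_zero_iff[of ?L] jordan_nf_dim[OF jnf A] unfolding dims by simp
  also have "\<dots> \<longleftrightarrow> (\<forall>(s, a) \<in> set n_as. jordan_block s a ^\<^sub>m k = 0\<^sub>m s s)"
    by (auto simp del: pow_mat.simps)
  also have "\<dots> \<longleftrightarrow> (\<forall>(s, a) \<in> set n_as. a = 0 \<and> s \<le> k)"
    using jordan_block_pow_zero_iff[OF pos] by (intro ball_cong) auto
  finally show ?thesis .
qed

section \<open>Jordan types of nilpotent matrices\<close>

lemma sh_max_le_of_pow_zero: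
  fixes A :: "'a::alg_closed_field mat"
  assumes A: "A \<in> carrier_mat n n" and "0 < n" and "A ^\<^sub>m k = 0\<^sub>m n n"
  shows "Max_mset (sh A) \<le> k"
proof -
  from jordan_nf_exists_alg_closed[OF A] obtain n_as where jnf: "jordan_nf A n_as" by auto
  have "\<forall>(s, a) \<in> set n_as. s \<le> k" using jordan_nf_pow_zero_iff[OF jnf A] assms(3) by auto
  moreover have "n_as \<noteq> []" using jordan_nf_dim[OF jnf A] \<open>0 < n\<close> by auto
  ultimately show ?thesis unfolding sh_jordan_nf[OF jnf] by (intro Max.boundedI) auto
qed

lemma mset_single_part:
  fixes xs :: "nat list"
  assumes "sum_list xs = n" "x \<in> set xs" "n \<le> x" "\<forall>y \<in> set xs. 0 < y"
  shows "mset xs = {#n#}"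
proof -
  have "sum_list xs = x + sum_list (remove1 x xs)" using assms(2) by (induction xs) auto
  hence rest0: "sum_list (remove1 x xs) = 0" and x: "x = n" using assms(1,3) by auto
  have "remove1 x xs = []"
  proof (rule ccontr)
    assume "remove1 x xs \<noteq> []"
    then obtain y where y: "y \<in> set (remove1 x xs)" by (cases "remove1 x xs") auto
    hence "y = 0" using rest0 by (simp add: sum_list_eq_0_iff)
    moreover have "y \<in> set xs" using y set_remove1_subset by fast
    ultimately show False using assms(4) by auto
  qed
  hence "mset xs - {#x#} = {#}" by (simp flip: mset_remove1)
  hence "mset xs = {#x#}" using insert_DiffM[of x "mset xs"] assms(2) by simp
  thus ?thesis using x by simp
qed

lemma sh_single_block_of_pow_nonzero:
  fixes A :: "'a::alg_closed_field mat"
  assumes A: "A \<in> carrier_mat n n" and "A ^\<^sub>m k = 0\<^sub>m n n" and "A ^\<^sub>m (n - 1) \<noteq> 0\<^sub>m n n"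
  shows "sh A = {#n#}"
proof -
  from jordan_nf_exists_alg_closed[OF A] obtain n_as where jnf: "jordan_nf A n_as" by auto
  have ev0: "\<forall>(s, a) \<in> set n_as. a = 0" using jordan_nf_pow_zero_iff[OF jnf A] assms(2) by auto
  have "\<not> (\<forall>(s, a) \<in> set n_as. a = 0 \<and> s \<le> n - 1)"
    using jordan_nf_pow_zero_iff[OF jnf A, of "n - 1"] assms(3) by simp
  then obtain s a where sa: "(s, a) \<in> set n_as" "\<not> (a = 0 \<and> s \<le> n - 1)" by auto
  with ev0 have "n - 1 < s" by auto
  have "mset (map fst n_as) = {#n#}"
  proof (rule mset_single_part[OF jordan_nf_dim[OF jnf A]])
    show "s \<in> set (map fst n_as)" using sa(1) by force
    show "n \<le> s" using \<open>n - 1 < s\<close> by linarith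
    show "\<forall>t \<in> set (map fst n_as). 0 < t" using jnf unfolding jordan_nf_def by force
  qed
  thus ?thesis unfolding sh_jordan_nf[OF jnf] .
qed

section \<open>The commutant of a nilpotent Jordan block: upper triangular Toeplitz matrices\<close>

text \<open>The upper triangular Toeplitz matrix of size l with first row given by the
  coefficients of p; it is p evaluated at the nilpotent shift, so only p modulo x^l matters.\<close>
definition toeplitz :: "nat \<Rightarrow> 'a::comm_ring_1 poly \<Rightarrow> 'a mat" where
  "toeplitz l p = mat l l (\<lambda>(i, j). if i \<le> j then coeff p (j - i) else 0)"

lemma toeplitz_carrier [simp]: "toeplitz l p \<in> carrier_mat l l"
  and toeplitz_dim [simp]: "dim_row (toeplitz l p) = l" "dim_col (toeplitz l p) = l"
  unfolding toeplitz_def by auto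

lemma toeplitz_index [simp]:
  "i < l \<Longrightarrow> j < l \<Longrightarrow> toeplitz l p $$ (i, j) = (if i \<le> j then coeff p (j - i) else 0)"
  unfolding toeplitz_def by auto

text \<open>Toeplitz matrices multiply like the polynomials: the (i, j) entry of the product is a
  convolution of coefficients, i.e. a coefficient of the polynomial product.\<close>
lemma toeplitz_mult: "toeplitz l (p * q) = toeplitz l p * toeplitz l q"
proof (rule eq_matI)
  fix i j assume "i < dim_row (toeplitz l p * toeplitz l q)" "j < dim_col (toeplitz l p * toeplitz l q)"
  hence i: "i < l" and j: "j < l" by auto
  let ?f = "\<lambda>m. (if i \<le> m then coeff p (m - i) else 0) * (if m \<le> j then coeff q (j - m) else 0)"
  have "(toeplitz l p * toeplitz l q) $$ (i, j) = (\<Sum>m \<in> {0..<l}. ?f m)"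
    using i j by (simp add: scalar_prod_def)
  also have "\<dots> = (if i \<le> j then coeff (p * q) (j - i) else 0)"
  proof (cases "i \<le> j")
    case True
    have "(\<Sum>m \<in> {0..<l}. ?f m) = (\<Sum>m \<in> {i..j}. ?f m)"
      by (rule sum.mono_neutral_right, insert j, auto)
    also have "\<dots> = (\<Sum>m \<in> {i..j}. coeff p (m - i) * coeff q (j - m))" by (rule sum.cong, auto)
    also have "\<dots> = (\<Sum>r \<in> {0..j - i}. coeff p r * coeff q (j - i - r))"
    proof -
      have "{i..j} = {0 + i..(j - i) + i}" using True by auto
      hence "(\<Sum>m \<in> {i..j}. coeff p (m - i) * coeff q (j - m)) =
          (\<Sum>r \<in> {0..j - i}. coeff p (r + i - i) * coeff q (j - (r + i)))"
        by (simp only: sum.shift_bounds_cl_nat_ivl)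
      also have "\<dots> = (\<Sum>r \<in> {0..j - i}. coeff p r * coeff q (j - i - r))"
        by (rule sum.cong, auto simp: add.commute)
      finally show ?thesis .
    qed
    also have "\<dots> = coeff (p * q) (j - i)" by (simp add: coeff_mult atLeast0AtMost)
    finally show ?thesis using True by simp
  qed simp
  finally show "toeplitz l (p * q) $$ (i, j) = (toeplitz l p * toeplitz l q) $$ (i, j)" using i j by simp
qed auto

lemma toeplitz_add: "toeplitz l (p + q) = toeplitz l p + toeplitz l q"
  by (rule eq_matI, auto)

lemma toeplitz_one: "toeplitz l 1 = 1\<^sub>m l"
  by (rule eq_matI, auto simp: coeff_1)

lemma toeplitz_zero: "toeplitz l 0 = 0\<^sub>m l l"
  by (rule eq_matI, auto)

lemma toeplitz_eq_zero_iff: "toeplitz l p = 0\<^sub>m l l \<longleftrightarrow> monom 1 l dvd p"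
proof
  assume z: "toeplitz l p = 0\<^sub>m l l"
  show "monom 1 l dvd p" unfolding monom_1_dvd_iff'
  proof (intro allI impI)
    fix k assume "k < l"
    with arg_cong[OF z, of "\<lambda>M. M $$ (0, k)"] show "coeff p k = 0" by auto
  qed
next
  assume "monom 1 l dvd p"
  hence "\<forall>k<l. coeff p k = 0" unfolding monom_1_dvd_iff' .
  thus "toeplitz l p = 0\<^sub>m l l" by (intro eq_matI, auto)
qed

lemma mult_jordan_block_zero_index:
  assumes X: "X \<in> carrier_mat l l" and i: "i < l" and j: "j < l"
  shows "(X * jordan_block l (0::'a::comm_ring_1)) $$ (i, j) = (if 0 < j then X $$ (i, j - 1) else 0)"
proof -
  have "(X * jordan_block l 0) $$ (i, j) =
      (\<Sum>m \<in> {0..<l}. X $$ (i, m) * (if m = j then 0 else if Suc m = j then 1 else 0))"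
    using X i j by (simp add: scalar_prod_def)
  also have "\<dots> = (\<Sum>m \<in> {0..<l}. if m = j - 1 \<and> 0 < j then X $$ (i, m) else 0)"
    by (rule sum.cong, auto)
  also have "\<dots> = (if 0 < j then X $$ (i, j - 1) else 0)"
    using j by (cases "0 < j", simp_all add: sum.delta')
  finally show ?thesis .
qed

lemma jordan_block_zero_mult_index:
  assumes X: "X \<in> carrier_mat l l" and i: "i < l" and j: "j < l"
  shows "(jordan_block l (0::'a::comm_ring_1) * X) $$ (i, j) = (if Suc i < l then X $$ (Suc i, j) else 0)"
proof -
  have "(jordan_block l 0 * X) $$ (i, j) =
      (\<Sum>m \<in> {0..<l}. (if i = m then 0 else if Suc i = m then 1 else 0) * X $$ (m, j))"
    using X i j by (simp add: scalar_prod_def)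
  also have "\<dots> = (\<Sum>m \<in> {0..<l}. if m = Suc i then X $$ (m, j) else 0)"
    by (rule sum.cong, auto)
  also have "\<dots> = (if Suc i < l then X $$ (Suc i, j) else 0)"
    by (simp add: sum.delta')
  finally show ?thesis .
qed

text \<open>A matrix commuting with the nilpotent Jordan block is constant along diagonals and
  upper triangular, i.e. the Toeplitz matrix of the polynomial formed by its first row.\<close>
lemma commutes_jordan_block_zero_toeplitz:
  fixes X :: "'a::comm_ring_1 mat"
  assumes X: "X \<in> carrier_mat l l" and comm: "X * jordan_block l 0 = jordan_block l 0 * X"
  shows "X = toeplitz l (\<Sum>k<l. monom (X $$ (0, k)) k)"
proof -
  have shift: "(if 0 < j then X $$ (i, j - 1) else 0) = (if Suc i < l then X $$ (Suc i, j) else 0)"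
    if "i < l" "j < l" for i j
    using arg_cong[OF comm, of "\<lambda>M. M $$ (i, j)"] mult_jordan_block_zero_index[OF X that]
      jordan_block_zero_mult_index[OF X that] by simp
  have diag: "X $$ (i, j) = (if i \<le> j then X $$ (0, j - i) else 0)" if "i < l" "j < l" for i j
    using that
  proof (induction i arbitrary: j)
    case (Suc i j)
    have step: "(if 0 < j then X $$ (i, j - 1) else 0) = X $$ (Suc i, j)"
      using shift[of i j] Suc.prems by auto
    show ?case
    proof (cases "j = 0")
      case False
      hence "X $$ (Suc i, j) = X $$ (i, j - 1)" using step by simp
      also have "\<dots> = (if i \<le> j - 1 then X $$ (0, j - 1 - i) else 0)"
        using Suc.IH[of "j - 1"] Suc.prems by auto
      finally show ?thesis using False by auto
    qed (use step in simp)
  qed simp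
  have first_row: "coeff (\<Sum>k<l. monom (X $$ (0, k)) k) m = (if m < l then X $$ (0, m) else 0)" for m
    by (simp add: coeff_sum coeff_monom)
  show ?thesis
  proof (rule eq_matI)
    fix i j assume "i < dim_row (toeplitz l (\<Sum>k<l. monom (X $$ (0, k)) k))"
      "j < dim_col (toeplitz l (\<Sum>k<l. monom (X $$ (0, k)) k))"
    hence i: "i < l" and j: "j < l" by auto
    show "X $$ (i, j) = toeplitz l (\<Sum>k<l. monom (X $$ (0, k)) k) $$ (i, j)"
      unfolding toeplitz_index[OF i j] first_row diag[OF i j] using j by auto
  qed (use X in auto)
qed

section \<open>2 x 2 matrices over a commutative ring\<close>

text \<open>A 2 x 2 matrix (a b; c d) is represented by the quadruple (a, b, c, d).\<close>
type_synonym 'a quad = "'a \<times> 'a \<times> 'a \<times> 'a"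

fun qmul :: "'a::comm_ring_1 quad \<Rightarrow> 'a quad \<Rightarrow> 'a quad" where
  "qmul (a, b, c, d) (e, f, g, h) = (a * e + b * g, a * f + b * h, c * e + d * g, c * f + d * h)"

definition qone :: "'a::comm_ring_1 quad" where
  "qone = (1, 0, 0, 1)"

fun qpow :: "nat \<Rightarrow> 'a::comm_ring_1 quad \<Rightarrow> 'a quad" where
  "qpow 0 P = qone"
| "qpow (Suc k) P = qmul (qpow k P) P"

fun qdet :: "'a::comm_ring_1 quad \<Rightarrow> 'a" where
  "qdet (a, b, c, d) = a * d - b * c"

fun qtr :: "'a::comm_ring_1 quad \<Rightarrow> 'a" where
  "qtr (a, b, c, d) = a + d"

fun qscale :: "'a::comm_ring_1 \<Rightarrow> 'a quad \<Rightarrow> 'a quad" where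
  "qscale s (a, b, c, d) = (s * a, s * b, s * c, s * d)"

fun qsub :: "'a::comm_ring_1 quad \<Rightarrow> 'a quad \<Rightarrow> 'a quad" where
  "qsub (a, b, c, d) (e, f, g, h) = (a - e, b - f, c - g, d - h)"

fun qdvd :: "'a::comm_ring_1 \<Rightarrow> 'a quad \<Rightarrow> bool" where
  "qdvd x (a, b, c, d) \<longleftrightarrow> x dvd a \<and> x dvd b \<and> x dvd c \<and> x dvd d"

lemma qmul_assoc: "qmul (qmul P Q) R = qmul P (qmul Q R)"
  by (cases P; cases Q; cases R; simp add: algebra_simps)

lemma qmul_qone [simp]: "qmul qone P = P" "qmul P qone = P"
  by (cases P; simp add: qone_def)+

lemma qpow_Suc_left: "qpow (Suc k) P = qmul P (qpow k P)"
proof (induction k)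
  case (Suc k)
  have "qpow (Suc (Suc k)) P = qmul (qmul P (qpow k P)) P" using Suc by simp
  thus ?case by (simp add: qmul_assoc)
qed simp

lemma qcayley_hamilton: "qmul (qmul P P) Q = qsub (qscale (qtr P) (qmul P Q)) (qscale (qdet P) Q)"
  by (cases P; cases Q; simp add: algebra_simps)

lemma qpow_recursion:
  "qpow (Suc (Suc k)) P = qsub (qscale (qtr P) (qpow (Suc k) P)) (qscale (qdet P) (qpow k P))"
proof -
  have "qpow (Suc (Suc k)) P = qmul (qmul P P) (qpow k P)"
    by (simp only: qpow_Suc_left qmul_assoc)
  thus ?thesis by (simp only: qcayley_hamilton qpow_Suc_left[symmetric])
qed

lemma qdet_qmul: "qdet (qmul P Q) = qdet P * qdet Q"
  by (cases P; cases Q; simp add: algebra_simps)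

lemma qdet_qpow: "qdet (qpow k P) = qdet P ^ k"
  by (induction k) (simp_all add: qone_def qdet_qmul)

lemma qdvd_qsub: "qdvd x P \<Longrightarrow> qdvd x Q \<Longrightarrow> qdvd x (qsub P Q)"
  by (cases P; cases Q; auto)

lemma qdvd_qscale: "y dvd s \<Longrightarrow> qdvd x P \<Longrightarrow> qdvd (y * x) (qscale s P)"
  by (cases P; auto intro: mult_dvd_mono)

lemma qdvd_one [simp]: "qdvd 1 P"
  by (cases P, auto)

lemma qdvd_trans: "x dvd y \<Longrightarrow> qdvd y P \<Longrightarrow> qdvd x P"
  by (cases P, auto intro: dvd_trans)

text \<open>A nilpotent 2 x 2 matrix over a field with zero determinant has zero trace: by
  Cayley-Hamilton its powers are P^(k+1) = tr(P)^k * P.\<close>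
lemma qpow_nilpotent_trace_zero:
  fixes P :: "'a::field quad"
  assumes "qpow m P = (0, 0, 0, 0)" and "qdet P = 0"
  shows "qtr P = 0"
proof (rule ccontr)
  assume t: "qtr P \<noteq> 0"
  have pow: "qpow (Suc k) P = qscale (qtr P ^ k) P" for k
  proof (induction k)
    case 0
    show ?case by (cases P, simp add: qone_def)
  next
    case (Suc k)
    have "qpow (Suc (Suc k)) P = qscale (qtr P) (qpow (Suc k) P)"
      using qpow_recursion[of k P] assms(2) by (cases "qpow (Suc k) P"; cases "qpow k P"; simp)
    with Suc.IH show ?case by (cases P, simp add: algebra_simps)
  qed
  have "m \<noteq> 0"
  proof
    assume "m = 0"
    with assms(1) show False by (simp add: qone_def)
  qed
  then obtain k where "m = Suc k" by (cases m) auto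
  hence "qscale (qtr P ^ k) P = (0, 0, 0, 0)" using assms(1) pow[of k] by simp
  hence "P = (0, 0, 0, 0)" using t by (cases P, auto)
  thus False using t by simp
qed

lemma qpow_divisible:
  fixes P :: "'a::comm_ring_1 quad"
  assumes tr: "x dvd qtr P" and det: "x ^ 2 dvd qdet P"
  shows "qdvd (x ^ k) (qpow (Suc k) P)"
proof -
  have det1: "x dvd qdet P" using det by (metis dvd_mult_left power2_eq_square)
  have "qdvd (x ^ k) (qpow (Suc k) P) \<and> qdvd (x ^ Suc k) (qpow (Suc (Suc k)) P)"
  proof (induction k)
    case 0
    have "qdvd (x * 1) (qpow (Suc (Suc 0)) P)"
      unfolding qpow_recursion
      by (intro qdvd_qsub qdvd_qscale tr det1) (simp_all add: qone_def)
    thus ?case by simp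
  next
    case (Suc k)
    have "qdvd (x * x ^ Suc k) (qscale (qtr P) (qpow (Suc (Suc k)) P))"
      using qdvd_qscale[OF tr] Suc.IH by blast
    moreover have "qdvd (x ^ 2 * x ^ k) (qscale (qdet P) (qpow (Suc k) P))"
      using qdvd_qscale[OF det] Suc.IH by blast
    ultimately have "qdvd (x ^ Suc (Suc k)) (qpow (Suc (Suc (Suc k))) P)"
      unfolding qpow_recursion[of "Suc k"]
      by (intro qdvd_qsub) (simp_all add: power_add[symmetric] power_Suc)
    thus ?case using Suc.IH by simp
  qed
  thus ?thesis by simp
qed

section \<open>The dichotomy for 2 x 2 matrices over F[x] modulo x^l\<close>

lemma x_dvd_iff_poly_0: "monom 1 1 dvd p \<longleftrightarrow> poly p 0 = 0"
  using monom_1_dvd_iff'[of 1 p] by (simp add: poly_0_coeff_0)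

fun qeval0 :: "'a::comm_ring_1 poly quad \<Rightarrow> 'a quad" where
  "qeval0 (a, b, c, d) = (poly a 0, poly b 0, poly c 0, poly d 0)"

lemma qeval0_qmul: "qeval0 (qmul P Q) = qmul (qeval0 P) (qeval0 Q)"
  by (cases P; cases Q; simp)

lemma qeval0_qpow: "qeval0 (qpow k P) = qpow k (qeval0 P)"
  by (induction k) (simp_all add: qone_def qeval0_qmul)

lemma qdet_qeval0: "qdet (qeval0 P) = poly (qdet P) 0"
  and qtr_qeval0: "qtr (qeval0 P) = poly (qtr P) 0"
  by (cases P; simp)+

lemma qdvd_x_qeval0:
  assumes "qdvd (monom 1 1) P"
  shows "qeval0 P = (0, 0, 0, 0)"
proof -
  obtain a b c d where P: "P = (a, b, c, d)" by (cases P) auto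
  show ?thesis using assms unfolding P qdvd.simps qeval0.simps x_dvd_iff_poly_0 by simp
qed

text \<open>If P is nilpotent modulo x^l and x divides det P, then P(0) is nilpotent with zero
  determinant, so x divides the trace as well.\<close>
lemma x_dvd_trace_of_nilpotent:
  fixes P :: "'a::field poly quad"
  assumes "0 < l" and nil: "qdvd (monom 1 l) (qpow m P)" and det: "monom 1 1 dvd qdet P"
  shows "monom 1 1 dvd qtr P"
proof -
  have "monom 1 1 dvd (monom 1 l :: 'a poly)" using \<open>0 < l\<close>
    by (simp add: monom_1_dvd_iff')
  hence "qdvd (monom 1 1) (qpow m P)" using nil by (rule qdvd_trans)
  hence "qpow m (qeval0 P) = (0, 0, 0, 0)" using qdvd_x_qeval0 by (simp add: qeval0_qpow[symmetric])
  moreover have "qdet (qeval0 P) = 0" using det unfolding qdet_qeval0 x_dvd_iff_poly_0 .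
  ultimately have "qtr (qeval0 P) = 0" by (rule qpow_nilpotent_trace_zero)
  thus ?thesis unfolding qtr_qeval0 x_dvd_iff_poly_0 .
qed

lemma order_power: "(p::'a::idom poly) \<noteq> 0 \<Longrightarrow> Polynomial.order a (p ^ n) = n * Polynomial.order a p"
  by (induction n) (simp_all add: order_mult)

text \<open>If x^2 does not divide det P, then x^l cannot divide all entries of P^(2l-1):
  otherwise x^(2l) would divide det (P^(2l-1)) = (det P)^(2l-1), of order at most 2l-1 at 0.\<close>
lemma qpow_not_divisible:
  fixes P :: "'a::field poly quad"
  assumes "0 < l" and det0: "qdet P \<noteq> 0" and det: "\<not> monom 1 2 dvd qdet P"
  shows "\<not> qdvd (monom 1 l) (qpow (2 * l - 1) P)"
proof
  assume q: "qdvd (monom 1 l) (qpow (2 * l - 1) P)"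
  obtain a b c d where Q: "qpow (2 * l - 1) P = (a, b, c, d)" by (cases "qpow (2 * l - 1) P") auto
  from q have dv: "monom 1 l dvd a" "monom 1 l dvd b" "monom 1 l dvd c" "monom 1 l dvd d"
    unfolding Q by auto
  have mm: "monom (1::'a) l * monom 1 l = monom 1 (2 * l)" by (simp add: mult_monom mult_2)
  have "monom 1 (2 * l) dvd a * d - b * c"
    using mult_dvd_mono[OF dv(1) dv(4)] mult_dvd_mono[OF dv(2) dv(3)] unfolding mm by (rule dvd_diff)
  hence "monom 1 (2 * l) dvd qdet P ^ (2 * l - 1)" using qdet_qpow[of "2 * l - 1" P] Q by simp
  hence "2 * l \<le> Polynomial.order 0 (qdet P ^ (2 * l - 1))" using det0 by (simp add: monom_1_dvd_iff)
  also have "\<dots> = (2 * l - 1) * Polynomial.order 0 (qdet P)" by (rule order_power[OF det0])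
  also have "\<dots> \<le> 2 * l - 1" using det det0 by (simp add: monom_1_dvd_iff)
  finally show False using \<open>0 < l\<close> by simp
qed

lemma nilpotent_qpow_dichotomy:
  fixes P :: "'a::field poly quad"
  assumes "0 < l" and nil: "qdvd (monom 1 l) (qpow m P)"
  shows "qdvd (monom 1 l) (qpow (l + 1) P) \<or> \<not> qdvd (monom 1 l) (qpow (2 * l - 1) P)"
proof (cases "monom 1 2 dvd qdet P")
  case True
  have "monom 1 1 dvd (monom 1 2 :: 'a poly)" by (simp add: monom_1_dvd_iff')
  hence "monom 1 1 dvd qdet P" using True by (rule dvd_trans)
  hence "monom 1 1 dvd qtr P" by (rule x_dvd_trace_of_nilpotent[OF assms])
  moreover have "monom 1 1 ^ 2 dvd qdet P" using True by (simp add: monom_power)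
  ultimately have "qdvd (monom 1 1 ^ l) (qpow (Suc l) P)" by (rule qpow_divisible)
  thus ?thesis by (simp add: monom_power)
next
  case False
  hence "qdet P \<noteq> 0" by auto
  with False show ?thesis using qpow_not_divisible[OF \<open>0 < l\<close>] by blast
qed

section \<open>The commutant of two equal nilpotent Jordan blocks\<close>

text \<open>The block matrix (T a, T b; T c, T d) of Toeplitz matrices attached to a 2 x 2
  polynomial matrix; it is a ring homomorphism from 2 x 2 matrices over F[x] to the
  matrices of size 2l.\<close>
fun block_toeplitz :: "nat \<Rightarrow> 'a::comm_ring_1 poly quad \<Rightarrow> 'a mat" where
  "block_toeplitz l (a, b, c, d) =
     four_block_mat (toeplitz l a) (toeplitz l b) (toeplitz l c) (toeplitz l d)"

lemma block_toeplitz_carrier [simp]: "block_toeplitz l P \<in> carrier_mat (l + l) (l + l)"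
  by (cases P, auto)

lemma block_toeplitz_dim [simp]: "dim_row (block_toeplitz l P) = l + l" "dim_col (block_toeplitz l P) = l + l"
  using block_toeplitz_carrier[of l P] unfolding carrier_mat_def by blast+

lemma block_toeplitz_qmul: "block_toeplitz l (qmul P Q) = block_toeplitz l P * block_toeplitz l Q"
proof -
  obtain a b c d where P: "P = (a, b, c, d)" by (cases P) auto
  obtain e f g h where Q: "Q = (e, f, g, h)" by (cases Q) auto
  show ?thesis unfolding P Q
    by (simp add: mult_four_block_mat[OF toeplitz_carrier toeplitz_carrier toeplitz_carrier
          toeplitz_carrier toeplitz_carrier toeplitz_carrier toeplitz_carrier toeplitz_carrier]
        toeplitz_mult toeplitz_add)
qed

lemma block_toeplitz_qpow: "block_toeplitz l (qpow k P) = block_toeplitz l P ^\<^sub>m k"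
proof (induction k)
  case 0
  have "four_block_mat (1\<^sub>m l) (0\<^sub>m l l) (0\<^sub>m l l) (1\<^sub>m l) = (1\<^sub>m (l + l) :: 'a mat)"
    by (rule eq_matI) auto
  thus ?case by (simp add: qone_def toeplitz_one toeplitz_zero)
qed (simp add: block_toeplitz_qmul)

lemma block_toeplitz_zero_iff: "block_toeplitz l P = 0\<^sub>m (l + l) (l + l) \<longleftrightarrow> qdvd (monom 1 l) P"
proof -
  obtain a b c d where P: "P = (a, b, c, d)" by (cases P) auto
  show ?thesis unfolding P by (simp add: four_block_zero_iff[of _ l l] toeplitz_eq_zero_iff)
qed

lemma jordan_matrix_two_blocks:
  "jordan_matrix [(l, 0::'a::comm_ring_1), (l, 0)] =
   four_block_mat (jordan_block l 0) (0\<^sub>m l l) (0\<^sub>m l l) (jordan_block l 0)"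
proof -
  have "four_block_mat (jordan_block l (0::'a)) (0\<^sub>m l 0) (0\<^sub>m 0 l) (0\<^sub>m 0 0) = jordan_block l 0"
    by (rule eq_matI) auto
  thus ?thesis unfolding jordan_matrix_Cons by (simp add: jordan_matrix_def)
qed

text \<open>A matrix commuting with N (+) N has blocks commuting with N, hence Toeplitz blocks:
  it is a block Toeplitz matrix.\<close>
lemma commutant_two_blocks:
  fixes A :: "'a::comm_ring_1 mat"
  assumes A: "A \<in> carrier_mat (l + l) (l + l)"
    and comm: "A * jordan_matrix [(l, 0), (l, 0)] = jordan_matrix [(l, 0), (l, 0)] * A"
  shows "\<exists>P. A = block_toeplitz l P"
proof -
  let ?N = "jordan_block l (0::'a)"
  obtain a b c d where sp: "split_block A l l = (a, b, c, d)" by (cases "split_block A l l") auto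
  from split_block[OF sp, of l l] A have a: "a \<in> carrier_mat l l" and b: "b \<in> carrier_mat l l"
    and c: "c \<in> carrier_mat l l" and d: "d \<in> carrier_mat l l"
    and A_eq: "A = four_block_mat a b c d" by auto
  have N: "?N \<in> carrier_mat l l" and z: "0\<^sub>m l l \<in> carrier_mat l l" by auto
  have prods: "?N * a \<in> carrier_mat l l" "?N * b \<in> carrier_mat l l" "?N * c \<in> carrier_mat l l"
    "?N * d \<in> carrier_mat l l" using a b c d N by auto
  have "A * jordan_matrix [(l, 0), (l, 0)] = four_block_mat (a * ?N) (b * ?N) (c * ?N) (d * ?N)"
    unfolding jordan_matrix_two_blocks A_eq
    by (subst mult_four_block_mat[OF a b c d N z z N], insert a b c d, simp)
  moreover have "jordan_matrix [(l, 0), (l, 0)] * A = four_block_mat (?N * a) (?N * b) (?N * c) (?N * d)"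
    unfolding jordan_matrix_two_blocks A_eq
    by (subst mult_four_block_mat[OF N z z N a b c d], insert a b c d prods, simp)
  ultimately have blocks_eq: "four_block_mat (a * ?N) (b * ?N) (c * ?N) (d * ?N) =
      four_block_mat (?N * a) (?N * b) (?N * c) (?N * d)" using comm by simp
  have rprods: "a * ?N \<in> carrier_mat l l" "b * ?N \<in> carrier_mat l l" "c * ?N \<in> carrier_mat l l"
    "d * ?N \<in> carrier_mat l l" using a b c d N by auto
  have cm: "a * ?N = ?N * a" "b * ?N = ?N * b" "c * ?N = ?N * c" "d * ?N = ?N * d"
    using blocks_eq unfolding four_block_eq_iff[OF rprods prods] by simp_all
  show ?thesis
    using commutes_jordan_block_zero_toeplitz[OF a cm(1)] commutes_jordan_block_zero_toeplitz[OF b cm(2)]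
      commutes_jordan_block_zero_toeplitz[OF c cm(3)] commutes_jordan_block_zero_toeplitz[OF d cm(4)] A_eq
    by (metis block_toeplitz.simps)
qed

section \<open>Nilpotent matrices commuting with B\<close>

lemma jordan_nf_two_equal_blocks:
  fixes B :: "'a::alg_closed_field mat"
  assumes nil: "nilpotent_mat B n" and sh: "sh B = {#l, l#}"
  shows "jordan_nf B [(l, 0), (l, 0)]"
proof -
  from nil obtain k where B: "B \<in> carrier_mat n n" and Bk: "B ^\<^sub>m k = 0\<^sub>m n n"
    unfolding nilpotent_mat_def by auto
  from jordan_nf_exists_alg_closed[OF B] obtain n_as where jnf: "jordan_nf B n_as" by auto
  have sizes: "mset (map fst n_as) = {#l, l#}" using sh_jordan_nf[OF jnf] sh by simp
  have ev0: "\<forall>(s, a) \<in> set n_as. a = 0" using jordan_nf_pow_zero_iff[OF jnf B] Bk by auto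
  have "length n_as = 2" using arg_cong[OF sizes, of size] by simp
  then obtain x y where xy: "n_as = [x, y]" by (auto simp: numeral_2_eq_2 length_Suc_conv)
  have fst_l: "fst z = l" if "z \<in> set n_as" for z
  proof -
    have "fst z \<in># mset (map fst n_as)" using that by simp
    thus ?thesis unfolding sizes by auto
  qed
  have "fst x = l" "fst y = l" using fst_l unfolding xy by auto
  with ev0 have "n_as = [(l, 0), (l, 0)]" unfolding xy by (cases x, cases y) auto
  with jnf show ?thesis by simp
qed

lemma commuting_similar_transfer:
  assumes wit: "similar_mat_wit B J P Q" and B: "B \<in> carrier_mat n n" and A: "A \<in> carrier_mat n n"
    and AB: "A * B = B * A"
  shows "(Q * A * P) * J = J * (Q * A * P)"
    and "(Q * A * P) ^\<^sub>m k = 0\<^sub>m n n \<longleftrightarrow> A ^\<^sub>m k = 0\<^sub>m n n"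
proof -
  from similar_mat_witD2[OF B wit] have PQ: "P * Q = 1\<^sub>m n" and QP: "Q * P = 1\<^sub>m n"
    and B_eq: "B = P * J * Q" and J: "J \<in> carrier_mat n n" and P: "P \<in> carrier_mat n n"
    and Q: "Q \<in> carrier_mat n n" by auto
  have "Q * B * P = (Q * P) * J * (Q * P)" unfolding B_eq using P Q J
    by (simp add: assoc_mult_mat[of _ n n _ n _ n])
  hence J_eq: "J = Q * B * P" using QP J by simp
  have "(Q * A * P) * J = Q * (A * (P * Q) * B) * P" unfolding J_eq using P Q A B
    by (simp add: assoc_mult_mat[of _ n n _ n _ n])
  also have "\<dots> = Q * (B * (P * Q) * A) * P" using PQ A B AB by simp
  also have "\<dots> = J * (Q * A * P)" unfolding J_eq using P Q A B
    by (simp add: assoc_mult_mat[of _ n n _ n _ n])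
  finally show "(Q * A * P) * J = J * (Q * A * P)" .
  have "similar_mat_wit A (Q * A * P) P Q"
  proof (rule similar_mat_witI[OF PQ QP])
    have "P * (Q * A * P) * Q = (P * Q) * A * (P * Q)" using P Q A
      by (simp add: assoc_mult_mat[of _ n n _ n _ n])
    thus "A = P * (Q * A * P) * Q" using PQ A by simp
  qed (use A P Q in auto)
  from similar_mat_wit_zero_iff[OF similar_mat_wit_pow[OF this, of k]] A
  show "(Q * A * P) ^\<^sub>m k = 0\<^sub>m n n \<longleftrightarrow> A ^\<^sub>m k = 0\<^sub>m n n" by auto
qed

lemma commuting_nilpotent_dichotomy:
  fixes A B :: "'a::field mat"
  assumes jnf: "jordan_nf B [(l, 0), (l, 0)]" and "0 < l"
    and B: "B \<in> carrier_mat (l + l) (l + l)" and A: "A \<in> carrier_mat (l + l) (l + l)"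
    and AB: "A * B = B * A" and nil: "A ^\<^sub>m m = 0\<^sub>m (l + l) (l + l)"
  shows "A ^\<^sub>m (l + 1) = 0\<^sub>m (l + l) (l + l) \<or> A ^\<^sub>m (2 * l - 1) \<noteq> 0\<^sub>m (l + l) (l + l)"
proof -
  from jnf obtain P Q where wit: "similar_mat_wit B (jordan_matrix [(l, 0), (l, 0)]) P Q"
    unfolding jordan_nf_def similar_mat_def by auto
  have "Q * A * P \<in> carrier_mat (l + l) (l + l)"
    using similar_mat_witD2[OF B wit] A by auto
  with commutant_two_blocks commuting_similar_transfer(1)[OF wit B A AB]
  obtain R where R: "Q * A * P = block_toeplitz l R" by blast
  have pow_zero: "A ^\<^sub>m k = 0\<^sub>m (l + l) (l + l) \<longleftrightarrow> qdvd (monom 1 l) (qpow k R)" for k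
    using commuting_similar_transfer(2)[OF wit B A AB, of k]
    unfolding R block_toeplitz_qpow[symmetric] block_toeplitz_zero_iff by simp
  show ?thesis
    using nilpotent_qpow_dichotomy[OF \<open>0 < l\<close> nil[unfolded pow_zero]] unfolding pow_zero .
qed

theorem proposition3p9:
  fixes B :: "'a :: {alg_closed_field, field_char_0} mat"
    and n lam :: nat and mu :: "nat multiset"
  assumes "nilpotent_mat B n"
    and "sh B = {#lam, lam#}"
    and "n = 2 * lam"
    and "mu \<in> partitions_of_nil_comm B n"
  shows "mu = {#n#} \<or> Max_mset mu \<le> lam + 1"
proof -
  from assms(4) obtain A k where mu: "mu = sh A" and A: "A \<in> carrier_mat n n"
    and Ak: "A ^\<^sub>m k = 0\<^sub>m n n" and AB: "A * B = B * A"
    unfolding partitions_of_nil_comm_def nil_comm_def nilpotent_mat_def by auto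
  have B: "B \<in> carrier_mat n n" using assms(1) unfolding nilpotent_mat_def by auto
  have jnf: "jordan_nf B [(lam, 0), (lam, 0)]" by (rule jordan_nf_two_equal_blocks[OF assms(1,2)])
  hence "0 < lam" unfolding jordan_nf_def by auto
  have n: "n = lam + lam" using assms(3) by simp
  from commuting_nilpotent_dichotomy[OF jnf \<open>0 < lam\<close>, of A k] B A AB Ak
  have "A ^\<^sub>m (lam + 1) = 0\<^sub>m n n \<or> A ^\<^sub>m (n - 1) \<noteq> 0\<^sub>m n n" unfolding n by (simp add: mult_2)
  thus ?thesis
  proof
    assume "A ^\<^sub>m (lam + 1) = 0\<^sub>m n n"
    hence "Max_mset mu \<le> lam + 1" unfolding mu using sh_max_le_of_pow_zero[OF A] \<open>0 < lam\<close> n by simp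
    thus ?thesis ..
  next
    assume "A ^\<^sub>m (n - 1) \<noteq> 0\<^sub>m n n"
    hence "mu = {#n#}" unfolding mu using sh_single_block_of_pow_nonzero[OF A Ak] by simp
    thus ?thesis ..
  qed
qed

end
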